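(* Let $\alpha,\beta\in(0,1)$ with $\alpha+\beta>1$. There is a constant $C$ (depending only on $\alpha,\beta$) such that for all sufficiently large $k$: with the medium-expectation rounding defined in the context, if $|\mathcal{M}_1^*(k)|>k^\beta$, $X_i$ ($i\in\mathcal{M}_1^*(k)$) are independent indicators with $\mathbb{E}[X_i]=p_i$ and $Y_i$ ($i\in\mathcal{M}_1^*(k)$) are independent indicators with $\mathbb{E}[Y_i]=q_i$, then $$\left\|\sum_{i\in\mathcal{M}_1^*(k)}X_i-\sum_{i\in\mathcal{M}_1^*(k)}Y_i\right\|\le C\left(k^{-\frac{\alpha+\beta-1}{2}}+k^{-\alpha}+k^{-1/2}\right).$$
   Context: $\|\cdot\|$ is total variation distance. Let $k$ be a positive integer, $\alpha\in(0,1)$, and $p_1,\dots,p_n\in[0,1]$. For $j=0,1,\dots,\lfloor k/2\rfloor$ let $I_j=[j/k,(j+1)/k)$ if $j<\lfloor k/2\rfloor$ and $I_{\lfloor k/2\rfloor}=[\lfloor k/2\rfloor/k,1/2]$; let $I^*_j=\{i:p_i\in I_j\}=\{j_1,\dots,j_{n_j}\}$ (listed in some fixed order, $n_j=|I^*_j|$), $p^j_i:=p_{j_i}$ and $\delta^j_i:=p^j_i-j/k$. Let $\mathcal{M}_1^*(k)=\bigcup_{j=\lfloor k^\alpha\rfloor}^{\lfloor k/2\rfloor}I^*_j$. Medium-expectation rounding: for $j=\lfloor k^\alpha\rfloor,\dots,\lfloor k/2\rfloor$ let $S_j=\sum_{i=1}^{n_j}\delta^j_i$, $m_j=\lfloor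 kS_j\rfloor$, and set $q_{j_i}=(j+1)/k$ for $i=1,\dots,m_j$ and $q_{j_i}=j/k$ for $i=m_j+1,\dots,n_j$. *)

theory Defs
  imports "HOL-Probability.Probability"
begin

definition tv_dist :: "'a pmf \<Rightarrow> 'a pmf \<Rightarrow> real" where
  "tv_dist P Q = (SUP A. \<bar>measure_pmf.prob P A - measure_pmf.prob Q A\<bar>)"

definition indep_ind_sum :: "nat set \<Rightarrow> (nat \<Rightarrow> real) \<Rightarrow> nat pmf" where
  "indep_ind_sum A p =
     map_pmf (\<lambda>x. \<Sum>i\<in>A. of_bool (x i)) (Pi_pmf A False (\<lambda>i. bernoulli_pmf (p i)))"

definition Ij :: "nat \<Rightarrow> nat \<Rightarrow> real set" where
  "Ij k j = (if j < k div 2 then {real j / real k ..< (real j + 1) / real k}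
             else {real j / real k .. 1/2})"

definition blk :: "nat \<Rightarrow> (nat \<Rightarrow> real) \<Rightarrow> nat \<Rightarrow> nat \<Rightarrow> nat set" where
  "blk k p n j = {i \<in> {..<n}. p i \<in> Ij k j}"

definition jrange :: "real \<Rightarrow> nat \<Rightarrow> nat set" where
  "jrange \<alpha> k = {nat \<lfloor>real k powr \<alpha>\<rfloor> .. k div 2}"

definition M1 :: "real \<Rightarrow> nat \<Rightarrow> (nat \<Rightarrow> real) \<Rightarrow> nat \<Rightarrow> nat set" where
  "M1 \<alpha> k p n = (\<Union>j\<in>jrange \<alpha> k. blk k p n j)"

definition Sj :: "nat \<Rightarrow> (nat \<Rightarrow> real) \<Rightarrow> nat \<Rightarrow> nat \<Rightarrow> real" where
  "Sj k p n j = (\<Sum>i\<in>blk k p n j. p i - real j / real k)"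

definition mj :: "nat \<Rightarrow> (nat \<Rightarrow> real) \<Rightarrow> nat \<Rightarrow> nat \<Rightarrow> nat" where
  "mj k p n j = nat \<lfloor>real k * Sj k p n j\<rfloor>"

text \<open>The fixed listing order of each block I*_j is
  given by an injective ranking \<sigma>: the i-th listed element of I*_j is the one
  with exactly i-1 elements of I*_j of smaller rank.\<close>
definition q_round :: "real \<Rightarrow> nat \<Rightarrow> (nat \<Rightarrow> real) \<Rightarrow> nat \<Rightarrow> (nat \<Rightarrow> nat) \<Rightarrow> nat \<Rightarrow> real" where
  "q_round \<alpha> k p n \<sigma> i =
    (if i \<in> M1 \<alpha> k p n then
       (let j = (THE j. j \<in> jrange \<alpha> k \<and> i \<in> blk k p n j) in
         if card {i' \<in> blk k p n j. \<sigma> i' < \<sigma> i} < mj k p n j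
         then (real j + 1) / real k else real j / real k)
     else p i)"

end

theory Submission
  imports Defs
begin

(* Every index of M_1 lies in a block I_j with j >= j_0 = floor(k^alpha), so with
   r = j_0/k both p_i and the rounded q_i lie in [r/2, 1 - r/2], they differ by at most 1/k,
   and the rounding lowers the total mean by an amount in [0, 1].  Each such indicator is a
   mixture: with probability r a fair coin, otherwise a Bernoulli variable with a "residual"
   parameter.  Sharing the fair coins between X and Y and maximally coupling the residual
   parts, both sums become Bin(M, 1/2) + U and Bin(M, 1/2) + V with M ~ Bin(|M_1|, r).
   Given (M, U, V) the two laws differ by at most |U - V| times the largest point mass of
   Bin(M, 1/2), which is O(M^(-1/2)); Cauchy-Schwarz together with E[1/(M+1)] <= 1/(|M_1| r)
   and E[(U - V)^2] <= 1 + |M_1|/k bounds the distance by O(sqrt((1 + |M_1|/k) / (|M_1| r))),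
   which is O(k^(-(alpha+beta-1)/2)) when |M_1| > k^beta. *)

section \<open>The fair binomial law\<close>

lemma central_binomial_step:
  "Suc n * ((2 * Suc n) choose Suc n) = 2 * (2*n+1) * ((2*n) choose n)"
proof -
  have a: "Suc n * (Suc (Suc (2*n)) choose Suc n) = Suc (Suc (2*n)) * (Suc (2*n) choose n)"
    by (rule Suc_times_binomial)
  have b: "Suc n * (Suc (2*n) choose Suc n) = Suc (2*n) * ((2*n) choose n)"
    by (rule Suc_times_binomial)
  have sym: "Suc (2*n) choose n = Suc (2*n) choose Suc n"
    using binomial_symmetric[of n "Suc (2*n)"] by simp
  have "Suc n * (Suc n * (Suc (Suc (2*n)) choose Suc n)) = Suc n * (2 * (2*n+1) * ((2*n) choose n))"
    unfolding a sym
    by (metis b mult.assoc mult.left_commute mult_2 add_Suc_right add_Suc Suc_eq_plus1 mult_Suc)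
  then have "Suc n * (Suc (Suc (2*n)) choose Suc n) = 2 * (2*n+1) * ((2*n) choose n)"
    by (simp only: Suc_mult_cancel1)
  moreover have "2 * Suc n = Suc (Suc (2*n))" by simp
  ultimately show ?thesis by (simp only:)
qed

lemma central_binomial_even_bound: "(real ((2*n) choose n) / 4^n)^2 \<le> 1 / real (2*n+1)"
proof (induction n)
  case 0 then show ?case by simp
next
  case (Suc n)
  define a where "a = real ((2*n) choose n) / 4^n"
  define c where "c = real ((2 * Suc n) choose Suc n)"
  have IH: "a^2 \<le> 1 / (2 * real n + 1)" using Suc.IH unfolding a_def by (simp add: add.commute)
  have "(real n + 1) * c = 2 * (2 * real n + 1) * real ((2*n) choose n)"
    using arg_cong[OF central_binomial_step[of n], of real] unfolding c_def
    by (simp del: binomial_Suc_Suc add: algebra_simps)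
  moreover have "2 * real n + 2 \<noteq> 0" "real n + 1 \<noteq> 0" by simp_all
  ultimately have "c / 4^Suc n = a * ((2 * real n + 1) / (2 * real n + 2))"
    unfolding a_def by (simp add: divide_simps) (simp add: algebra_simps)
  then have "(c / 4^Suc n)^2 = a^2 * ((2 * real n + 1)^2 / (2 * real n + 2)^2)"
    by (simp add: power_mult_distrib power_divide)
  also have "\<dots> \<le> 1 / (2 * real n + 1) * ((2 * real n + 1)^2 / (2 * real n + 2)^2)"
    using IH by (intro mult_right_mono) simp_all
  also have "\<dots> = (2 * real n + 1) / (2 * real n + 2)^2"
    by (simp add: power2_eq_square)
  also have "\<dots> \<le> 1 / real (2 * Suc n + 1)"
  proof -
    have "(2 * real n + 1) * (3 + 2 * real n) \<le> 1 * (2 * real n + 2)^2"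
      by (simp add: power2_eq_square algebra_simps)
    then show ?thesis by (simp add: frac_le_eq divide_le_eq le_divide_eq)
  qed
  finally show ?case unfolding c_def .
qed

definition fair_binomial_mode :: "nat \<Rightarrow> real" where
  "fair_binomial_mode m = real (m choose (m div 2)) / 2^m"

lemma fair_binomial_mode_nonneg: "0 \<le> fair_binomial_mode m"
  unfolding fair_binomial_mode_def by simp

text \<open>The mode probability is \<open>O(1/sqrt m)\<close>; odd \<open>m\<close> reduce to the even case by Pascal's rule.\<close>
lemma fair_binomial_mode_sq: "(fair_binomial_mode m)^2 \<le> 2 / (real m + 1)"
proof (cases "even m")
  case True
  then obtain n where m: "m = 2*n" by auto
  have "fair_binomial_mode m = real ((2*n) choose n) / 4^n"
    unfolding fair_binomial_mode_def m by (simp add: power_mult)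
  moreover have "1 / real (2*n+1) \<le> 2 / (real m + 1)" by (simp add: m field_simps)
  ultimately show ?thesis using central_binomial_even_bound[of n] by simp
next
  case False
  then obtain n where m: "m = Suc (2*n)" by (metis oddE Suc_eq_plus1)
  have "Suc (2*n) choose n \<le> 2 * ((2*n) choose n)"
  proof (cases n)
    case (Suc k)
    then have "Suc (2*n) choose n = ((2*n) choose k) + ((2*n) choose n)" by simp
    then show ?thesis using binomial_maximum'[of n k] by simp
  qed simp
  then have "real (m choose (m div 2)) / (2 * 4^n) \<le> 2 * real ((2*n) choose n) / (2 * 4^n)"
    unfolding m by (intro divide_right_mono) simp_all
  moreover have "(2::real)^m = 2 * 4^n" by (simp add: m power_mult)
  ultimately have "fair_binomial_mode m \<le> real ((2*n) choose n) / 4^n"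
    unfolding fair_binomial_mode_def by simp
  then have "(fair_binomial_mode m)^2 \<le> (real ((2*n) choose n) / 4^n)^2"
    using fair_binomial_mode_nonneg by (rule power_mono)
  also have "\<dots> \<le> 1 / real (2*n+1)" by (rule central_binomial_even_bound)
  also have "\<dots> \<le> 2 / (real m + 1)" by (simp add: m field_simps)
  finally show ?thesis .
qed

text \<open>For a unimodal sequence \<open>f\<close> with mode \<open>h\<close> that vanishes beyond \<open>N\<close>, every partial
  sum of its increments is bounded in absolute value by the peak \<open>f h\<close>: positive increments
  sit left of the mode and add up to at most \<open>f h\<close>, negative ones sit right of it.\<close>
lemma unimodal_increment_sum:
  fixes f :: "nat \<Rightarrow> real"
  defines "inc t \<equiv> f t - (if t = 0 then 0 else f (t - 1))"
  assumes T: "T \<subseteq> {..Suc N}" and "h \<le> N" and f0: "0 \<le> f 0"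
    and up: "\<And>t. 0 < t \<Longrightarrow> t \<le> h \<Longrightarrow> f (t - 1) \<le> f t"
    and down: "\<And>t. h < t \<Longrightarrow> f t \<le> f (t - 1)"
    and vanish: "f (Suc N) = 0"
  shows "\<bar>\<Sum>t\<in>T. inc t\<bar> \<le> f h"
proof -
  have finT: "finite T" using T finite_subset by blast
  have telescope: "(\<Sum>t\<le>k. inc t) = f k" for k
    by (induction k) (simp_all add: inc_def)
  have inc_pos: "0 \<le> inc t" if "t \<le> h" for t
    using that f0 up[of t] by (cases "t = 0") (simp_all add: inc_def)
  have inc_neg: "inc t \<le> 0" if "h < t" for t
    using that down[of t] by (simp add: inc_def)
  have right_total: "(\<Sum>t\<in>{h<..Suc N}. inc t) = - f h"
  proof -
    have "{..Suc N} = {..h} \<union> {h<..Suc N}" "{..h} \<inter> {h<..Suc N} = {}" using \<open>h \<le> N\<close> by auto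
    then have "(\<Sum>t\<le>Suc N. inc t) = (\<Sum>t\<le>h. inc t) + (\<Sum>t\<in>{h<..Suc N}. inc t)"
      by (simp add: sum.union_disjoint)
    then show ?thesis using telescope[of h] telescope[of "Suc N"] vanish by simp
  qed
  have "(\<Sum>t\<in>T. inc t) \<le> f h"
  proof -
    have "(\<Sum>t\<in>T. inc t) = (\<Sum>t\<in>T \<inter> {..h}. inc t) + (\<Sum>t\<in>T - {..h}. inc t)"
      using finT by (metis sum.Int_Diff)
    also have "(\<Sum>t\<in>T - {..h}. inc t) \<le> 0" by (rule sum_nonpos) (auto intro: inc_neg)
    also have "(\<Sum>t\<in>T \<inter> {..h}. inc t) \<le> (\<Sum>t\<le>h. inc t)"
      by (rule sum_mono2) (auto intro: inc_pos)
    finally show ?thesis using telescope[of h] by simp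
  qed
  moreover have "- f h \<le> (\<Sum>t\<in>T. inc t)"
  proof -
    have "(\<Sum>t\<in>T. inc t) = (\<Sum>t\<in>T \<inter> {h<..Suc N}. inc t) + (\<Sum>t\<in>T - {h<..Suc N}. inc t)"
      using finT by (metis sum.Int_Diff)
    moreover have "0 \<le> (\<Sum>t\<in>T - {h<..Suc N}. inc t)"
      using T by (intro sum_nonneg) (auto intro: inc_pos)
    moreover have "(\<Sum>t\<in>T \<inter> {h<..Suc N}. - inc t) \<le> (\<Sum>t\<in>{h<..Suc N}. - inc t)"
      by (rule sum_mono2) (auto simp: inc_neg)
    ultimately show ?thesis using right_total by (simp add: sum_negf)
  qed
  ultimately show ?thesis by (simp add: abs_le_iff)
qed

lemma pmf_fair_binomial: "pmf (binomial_pmf m (1/2)) s = real (m choose s) / 2^m"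
proof (cases "s \<le> m")
  case True
  have "(1/2::real)^s * (1/2)^(m-s) = (1/2)^m" using True by (simp flip: power_add)
  then show ?thesis by (simp add: power_divide)
qed (simp add: binomial_eq_0)

lemma fair_binomial_shift_one:
  "\<bar>measure (binomial_pmf m (1/2)) A - measure (binomial_pmf m (1/2)) {s. Suc s \<in> A}\<bar>
     \<le> fair_binomial_mode m"
proof -
  define B where "B = binomial_pmf m (1/2)"
  define f where "f t = real (m choose t) / 2^m" for t
  define T where "T = A \<inter> {..Suc m}"
  have finT: "finite T" unfolding T_def by simp
  have pmf_B: "pmf B s = f s" for s unfolding B_def f_def by (rule pmf_fair_binomial)
  have f_vanish: "f t = 0" if "m < t" for t using that unfolding f_def by simp
  have prob_B: "measure B E = sum f (E \<inter> {..m})" for E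
  proof -
    have "measure B E = measure B (E \<inter> set_pmf B)" by (simp add: measure_Int_set_pmf)
    also have "\<dots> = sum f (E \<inter> {..m})" by (simp add: B_def measure_measure_pmf_finite pmf_B[unfolded B_def])
    finally show ?thesis .
  qed
  have "sum f (A \<inter> {..m}) = sum f T"
    unfolding T_def by (rule sum.mono_neutral_left) (auto simp: f_vanish not_le)
  moreover have "sum f ({s. Suc s \<in> A} \<inter> {..m}) = (\<Sum>t\<in>T. if t = 0 then 0 else f (t - 1))"
  proof -
    have "x \<in> T - {0} \<longleftrightarrow> x \<in> Suc ` ({s. Suc s \<in> A} \<inter> {..m})" for x
      by (cases x) (auto simp: T_def)
    then have "T - {0} = Suc ` ({s. Suc s \<in> A} \<inter> {..m})" by blast
    then have "(\<Sum>t\<in>T - {0}. f (t - 1)) = sum f ({s. Suc s \<in> A} \<inter> {..m})"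
      by (simp add: sum.reindex)
    moreover have "(\<Sum>t\<in>T. if t = 0 then 0 else f (t - 1)) = (\<Sum>t\<in>T - {0}. f (t - 1))"
      using finT by (intro sum.mono_neutral_cong_right) auto
    ultimately show ?thesis by simp
  qed
  ultimately have "measure B A - measure B {s. Suc s \<in> A} = (\<Sum>t\<in>T. f t - (if t = 0 then 0 else f (t - 1)))"
    by (simp add: prob_B sum_subtractf)
  also have "\<bar>\<dots>\<bar> \<le> f (m div 2)"
  proof (rule unimodal_increment_sum)
    show "T \<subseteq> {..Suc m}" "m div 2 \<le> m" "0 \<le> f 0" "f (Suc m) = 0"
      by (auto simp: T_def f_def)
    show "f (t - 1) \<le> f t" if "0 < t" "t \<le> m div 2" for t
      using that binomial_mono[of "t - 1" t m] unfolding f_def by (simp add: divide_right_mono)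
    show "f t \<le> f (t - 1)" if "m div 2 < t" for t
    proof (cases "t \<le> m")
      case True
      then show ?thesis using that binomial_antimono[of "t - 1" t m] unfolding f_def by (simp add: divide_right_mono)
    qed (simp add: f_def binomial_eq_0)
  qed
  finally show ?thesis unfolding B_def f_def fair_binomial_mode_def .
qed

lemma fair_binomial_shift:
  "\<bar>measure (map_pmf (\<lambda>s. s + u) (binomial_pmf m (1/2))) A
     - measure (map_pmf (\<lambda>s. s + v) (binomial_pmf m (1/2))) A\<bar>
   \<le> \<bar>real u - real v\<bar> * fair_binomial_mode m"
proof -
  define P where "P w = measure (map_pmf (\<lambda>s. s + w) (binomial_pmf m (1/2))) A" for w
  have step: "\<bar>P w - P (Suc w)\<bar> \<le> fair_binomial_mode m" for w
    using fair_binomial_shift_one[of m "{s. s + w \<in> A}"] unfolding P_def by (simp add: vimage_def)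
  have iterate: "\<bar>P w - P (w + d)\<bar> \<le> real d * fair_binomial_mode m" for w d
  proof (induction d)
    case (Suc d)
    have "\<bar>P w - P (w + Suc d)\<bar> \<le> \<bar>P w - P (w + d)\<bar> + \<bar>P (w + d) - P (Suc (w + d))\<bar>" by simp
    also have "\<dots> \<le> real d * fair_binomial_mode m + fair_binomial_mode m"
      using Suc.IH step[of "w + d"] by linarith
    finally show ?case by (simp add: algebra_simps)
  qed simp
  show ?thesis
  proof (cases "u \<le> v")
    case True
    then obtain d where "v = u + d" using le_Suc_ex by blast
    then show ?thesis using iterate[of u d] unfolding P_def by simp
  next
    case False
    then obtain d where "u = v + d" by (metis le_Suc_ex nat_le_linear)
    then show ?thesis using iterate[of v d] unfolding P_def by (simp add: abs_minus_commute)
  qed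
qed

text \<open>The inverse first moment of a binomial law: \<open>E[1/(M+1)] \<le> 1/((n+1) r)\<close>. This is
  what makes the mode bound \<open>O(1/sqrt M)\<close> usable when \<open>M\<close> itself is random.\<close>
lemma binomial_inverse_moment:
  assumes r: "0 < r" "r \<le> 1"
  shows "measure_pmf.expectation (binomial_pmf n r) (\<lambda>m. 1 / (real m + 1)) \<le> 1 / ((real n + 1) * r)"
proof -
  define g where "g k = real (Suc n choose k) * r^k * (1-r)^(Suc n - k)" for k
  have summand: "1 / (real m + 1) * pmf (binomial_pmf n r) m = g (Suc m) / ((real n + 1) * r)" for m
  proof -
    define c where "c = real (Suc n choose Suc m)"
    have "real (Suc m) * c = real (Suc n) * real (n choose m)"
      using arg_cong[OF Suc_times_binomial[of m n], of real] unfolding c_def by (simp only: of_nat_mult)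
    then have ratio: "real (n choose m) / (real m + 1) = c / (real n + 1)"
      by (simp add: field_simps)
    have "1 / (real m + 1) * pmf (binomial_pmf n r) m
          = real (n choose m) / (real m + 1) * (r^m * (1-r)^(n-m))"
      using r by simp
    also have "\<dots> = (r * (c * (r^m * (1-r)^(n-m)))) / (r * (real n + 1))"
      unfolding ratio using r by simp
    also have "\<dots> = g (Suc m) / ((real n + 1) * r)"
      unfolding g_def c_def by (simp only: power_Suc diff_Suc_Suc ac_simps)
    finally show ?thesis .
  qed
  have "set_pmf (binomial_pmf n r) \<subseteq> {..n}" using r by (auto simp: set_pmf_binomial_eq)
  then have "measure_pmf.expectation (binomial_pmf n r) (\<lambda>m. 1 / (real m + 1))
        = (\<Sum>m\<le>n. 1 / (real m + 1) * pmf (binomial_pmf n r) m)"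
    by (intro integral_measure_pmf_real) auto
  also have "\<dots> = (\<Sum>m\<le>n. g (Suc m)) / ((real n + 1) * r)"
    by (simp only: summand sum_divide_distrib)
  also have "\<dots> \<le> 1 / ((real n + 1) * r)"
  proof (rule divide_right_mono)
    have "(\<Sum>k\<le>Suc n. g k) = (r + (1-r))^(Suc n)" unfolding g_def by (simp only: binomial_ring)
    moreover have "(\<Sum>k\<le>Suc n. g k) = g 0 + (\<Sum>m\<le>n. g (Suc m))" by (rule sum.atMost_Suc_shift)
    moreover have "g 0 \<ge> 0" unfolding g_def using r by simp
    ultimately show "(\<Sum>m\<le>n. g (Suc m)) \<le> 1" by simp
  qed (use r in simp)
  finally show ?thesis .
qed

lemma bool_pmf_eqI:
  fixes P Q :: "bool pmf"
  assumes "pmf P True = pmf Q True"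
  shows "P = Q"
proof (rule pmf_eqI)
  have total: "pmf M True + pmf M False = 1" for M :: "bool pmf"
  proof -
    have "1 = sum (pmf M) UNIV" using measure_measure_pmf_finite[of UNIV M] by simp
    then show ?thesis by (simp add: UNIV_bool)
  qed
  show "pmf P x = pmf Q x" for x
    using assms total[of P] total[of Q] by (cases x) auto
qed

lemma bernoulli_mixture:
  assumes "0 \<le> r" "r \<le> 1" "0 \<le> a" "a \<le> 1"
  shows "bind_pmf (bernoulli_pmf r) (\<lambda>z. if z then bernoulli_pmf (1/2) else bernoulli_pmf a)
         = bernoulli_pmf (r/2 + (1-r)*a)"
proof (rule bool_pmf_eqI)
  have "(1-r)*a \<le> 1-r" using assms by (simp add: mult_left_le)
  then show "pmf (bind_pmf (bernoulli_pmf r) (\<lambda>z. if z then bernoulli_pmf (1/2) else bernoulli_pmf a)) True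
        = pmf (bernoulli_pmf (r/2 + (1-r)*a)) True"
    using assms by (simp add: pmf_bind)
qed

lemma expectation_bind_finite:
  fixes h :: "'b \<Rightarrow> real"
  assumes "finite (set_pmf M)" "\<And>x. x \<in> set_pmf M \<Longrightarrow> finite (set_pmf (K x))"
  shows "measure_pmf.expectation (bind_pmf M K) h
         = measure_pmf.expectation M (\<lambda>x. measure_pmf.expectation (K x) h)"
proof -
  have "measure_pmf.expectation (bind_pmf M K) h
        = (\<Sum>x\<in>set_pmf M. pmf M x *\<^sub>R measure_pmf.expectation (K x) h)"
    using assms by (intro pmf_expectation_bind) auto
  also have "\<dots> = measure_pmf.expectation M (\<lambda>x. measure_pmf.expectation (K x) h)"
    using assms by (subst integral_measure_pmf[of "set_pmf M"]) auto
  finally show ?thesis .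
qed

lemma prob_bind_finite:
  assumes "finite (set_pmf M)" "\<And>x. finite (set_pmf (K x))"
  shows "measure_pmf.prob (bind_pmf M K) A = measure_pmf.expectation M (\<lambda>x. measure_pmf.prob (K x) A)"
  using expectation_bind_finite[of M K "indicator A"] assms by simp

lemma indep_ind_sum_insert:
  assumes "finite A" "i \<notin> A"
  shows "indep_ind_sum (insert i A) p =
         bind_pmf (bernoulli_pmf (p i)) (\<lambda>b. map_pmf (\<lambda>s. s + of_bool b) (indep_ind_sum A p))"
proof -
  define Pi where "Pi = Pi_pmf A False (\<lambda>i. bernoulli_pmf (p i))"
  define S where "S x = (\<Sum>j\<in>insert i A. of_bool (x j) :: nat)" for x
  have S_upd: "S (f(i := y)) = (\<Sum>j\<in>A. of_bool (f j)) + of_bool y" for f y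
  proof -
    have "S (f(i := y)) = of_bool y + (\<Sum>j\<in>A. of_bool ((f(i := y)) j))"
      unfolding S_def sum.insert[OF assms] by (simp only: fun_upd_same)
    also have "(\<Sum>j\<in>A. of_bool ((f(i := y)) j) :: nat) = (\<Sum>j\<in>A. of_bool (f j))"
      using assms by (intro sum.cong) auto
    finally show ?thesis by (simp only: add.commute)
  qed
  have "indep_ind_sum (insert i A) p
        = map_pmf S (bind_pmf (bernoulli_pmf (p i)) (\<lambda>y. bind_pmf Pi (\<lambda>f. return_pmf (f(i := y)))))"
    unfolding indep_ind_sum_def S_def Pi_def using Pi_pmf_insert'[OF assms, of False "\<lambda>i. bernoulli_pmf (p i)"] by simp
  also have "\<dots> = bind_pmf (bernoulli_pmf (p i)) (\<lambda>y. map_pmf (\<lambda>f. S (f(i := y))) Pi)"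
    by (simp add: map_bind_pmf map_pmf_def bind_assoc_pmf bind_return_pmf)
  also have "\<dots> = bind_pmf (bernoulli_pmf (p i)) (\<lambda>b. map_pmf (\<lambda>s. s + of_bool b) (indep_ind_sum A p))"
    unfolding indep_ind_sum_def Pi_def[symmetric] S_upd by (simp add: map_pmf_comp o_def)
  finally show ?thesis .
qed

section \<open>The maximal coupling of two Bernoulli laws\<close>

text \<open>The maximal coupling of \<open>Bernoulli(a)\<close> and \<open>Bernoulli(b)\<close>: both coordinates are
  \<open>True\<close> with probability \<open>min a b\<close>, and they differ with probability \<open>|a - b|\<close>.\<close>
definition bernoulli_coupling :: "real \<Rightarrow> real \<Rightarrow> (bool \<times> bool) pmf" where
  "bernoulli_coupling a b = (if a \<le> b then
     bind_pmf (bernoulli_pmf a) (\<lambda>x. if x then return_pmf (True, True)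
                                    else map_pmf (\<lambda>e. (False, e)) (bernoulli_pmf ((b - a) / (1 - a))))
   else
     bind_pmf (bernoulli_pmf b) (\<lambda>x. if x then return_pmf (True, True)
                                    else map_pmf (\<lambda>e. (e, False)) (bernoulli_pmf ((a - b) / (1 - b)))))"

lemma finite_set_bernoulli_coupling: "finite (set_pmf (bernoulli_coupling a b))"
  by (rule finite_subset[OF subset_UNIV]) simp

lemma conditional_parameter:
  fixes a b :: real
  assumes "0 \<le> a" "a \<le> b" "b \<le> 1"
  shows "0 \<le> (b - a) / (1 - a)" "(b - a) / (1 - a) \<le> 1" "(1 - a) * ((b - a) / (1 - a)) = b - a"
proof -
  show "0 \<le> (b - a) / (1 - a)" using assms by simp
  show "(b - a) / (1 - a) \<le> 1" using assms by (cases "a = 1") (simp_all add: divide_le_eq)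
  show "(1 - a) * ((b - a) / (1 - a)) = b - a" using assms by (cases "a = 1") simp_all
qed

lemma expectation_bernoulli_coupling:
  fixes h :: "bool \<times> bool \<Rightarrow> real"
  assumes "0 \<le> a" "a \<le> 1" "0 \<le> b" "b \<le> 1"
  shows "measure_pmf.expectation (bernoulli_coupling a b) h
         = min a b * h (True, True) + (a - min a b) * h (True, False)
           + (b - min a b) * h (False, True) + (1 - max a b) * h (False, False)"
proof (cases "a \<le> b")
  case True
  define e where "e = (b - a) / (1 - a)"
  note e = conditional_parameter[OF assms(1) True assms(4), folded e_def]
  have "bernoulli_coupling a b = bind_pmf (bernoulli_pmf a) (\<lambda>x. if x then return_pmf (True, True)
          else map_pmf (\<lambda>e. (False, e)) (bernoulli_pmf e))"
    using True unfolding bernoulli_coupling_def e_def by simp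
  then have "measure_pmf.expectation (bernoulli_coupling a b) h
             = a * h (True, True) + (1 - a) * (e * h (False, True) + (1 - e) * h (False, False))"
    using assms e by (simp add: expectation_bind_finite)
  also have "\<dots> = a * h (True, True) + ((1 - a) * e) * h (False, True) + ((1 - a) - (1 - a) * e) * h (False, False)"
    by (simp add: algebra_simps)
  finally show ?thesis unfolding e(3) using True by simp
next
  case False
  define e where "e = (a - b) / (1 - b)"
  have "b \<le> a" using False by simp
  note e = conditional_parameter[OF assms(3) this assms(2), folded e_def]
  have "bernoulli_coupling a b = bind_pmf (bernoulli_pmf b) (\<lambda>x. if x then return_pmf (True, True)
          else map_pmf (\<lambda>e. (e, False)) (bernoulli_pmf e))"
    using False unfolding bernoulli_coupling_def e_def by simp
  then have "measure_pmf.expectation (bernoulli_coupling a b) h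
             = b * h (True, True) + (1 - b) * (e * h (True, False) + (1 - e) * h (False, False))"
    using assms e by (simp add: expectation_bind_finite)
  also have "\<dots> = b * h (True, True) + ((1 - b) * e) * h (True, False) + ((1 - b) - (1 - b) * e) * h (False, False)"
    by (simp add: algebra_simps)
  finally show ?thesis unfolding e(3) using False by simp
qed

lemma bernoulli_coupling_marginals:
  assumes "0 \<le> a" "a \<le> 1" "0 \<le> b" "b \<le> 1"
  shows "map_pmf fst (bernoulli_coupling a b) = bernoulli_pmf a"
    and "map_pmf snd (bernoulli_coupling a b) = bernoulli_pmf b"
proof -
  have prob: "pmf (map_pmf f (bernoulli_coupling a b)) True
              = measure_pmf.expectation (bernoulli_coupling a b) (\<lambda>z. of_bool (f z))" for f
  proof -
    have "(\<lambda>z. of_bool (f z) :: real) = indicator (f -` {True})" by (auto simp: indicator_def)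
    then show ?thesis by (simp add: pmf_map)
  qed
  show "map_pmf fst (bernoulli_coupling a b) = bernoulli_pmf a"
    by (rule bool_pmf_eqI) (use assms in \<open>simp add: prob expectation_bernoulli_coupling\<close>)
  show "map_pmf snd (bernoulli_coupling a b) = bernoulli_pmf b"
    by (rule bool_pmf_eqI) (use assms in \<open>simp add: prob expectation_bernoulli_coupling\<close>)
qed

section \<open>Coupling two sums of independent indicators\<close>

text \<open>A state \<open>(m, u, v)\<close> of the coupling records \<open>m\<close> indices whose indicators are (jointly)
  fair coins not yet tossed, and the partial sums \<open>u\<close>, \<open>v\<close> of the remaining parts of the
  \<open>X\<close>- and \<open>Y\<close>-indicators. Tossing the \<open>m\<close> shared fair coins yields the two sums.\<close>
type_synonym split_state = "nat \<times> nat \<times> nat"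

definition sum_X_given :: "split_state \<Rightarrow> nat pmf" where
  "sum_X_given t = (case t of (m, u, v) \<Rightarrow> map_pmf (\<lambda>s. s + u) (binomial_pmf m (1/2)))"

definition sum_Y_given :: "split_state \<Rightarrow> nat pmf" where
  "sum_Y_given t = (case t of (m, u, v) \<Rightarrow> map_pmf (\<lambda>s. s + v) (binomial_pmf m (1/2)))"

definition state_gap :: "split_state \<Rightarrow> real" where
  "state_gap t = (case t of (m, u, v) \<Rightarrow> real u - real v)"

text \<open>Adding one index: with probability \<open>r\<close> both indicators become a shared fair coin,
  otherwise they are drawn from the maximal coupling of the residual laws \<open>a\<close>, \<open>b\<close>.\<close>
definition split_step :: "real \<Rightarrow> real \<Rightarrow> real \<Rightarrow> split_state \<Rightarrow> split_state pmf" where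
  "split_step r a b t = (case t of (m, u, v) \<Rightarrow> bind_pmf (bernoulli_pmf r)
      (\<lambda>z. if z then return_pmf (Suc m, u, v)
           else map_pmf (\<lambda>(x, y). (m, u + of_bool x, v + of_bool y)) (bernoulli_coupling a b)))"

lemma finite_set_split_step: "finite (set_pmf (split_step r a b t))"
proof -
  have "finite (set_pmf (bernoulli_pmf r))" by (rule finite_subset[OF subset_UNIV]) simp
  then show ?thesis
    using finite_set_bernoulli_coupling unfolding split_step_def by (auto split: prod.split)
qed

lemma fair_binomial_Suc_shift:
  "map_pmf (\<lambda>s. s + u) (binomial_pmf (Suc m) (1/2)) =
   bind_pmf (bernoulli_pmf (1/2)) (\<lambda>x. map_pmf (\<lambda>s. s + (u + of_bool x)) (binomial_pmf m (1/2)))"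
  by (simp add: binomial_pmf_Suc map_bind_pmf map_pmf_def bind_assoc_pmf bind_return_pmf algebra_simps
           cong: if_cong) (auto intro!: bind_pmf_cong)

lemma split_step_sum_X:
  assumes "0 \<le> r" "r \<le> 1" "0 \<le> a" "a \<le> 1" "0 \<le> b" "b \<le> 1"
  shows "bind_pmf (split_step r a b t) sum_X_given =
         bind_pmf (bernoulli_pmf (r/2 + (1-r)*a)) (\<lambda>x. map_pmf (\<lambda>s. s + of_bool x) (sum_X_given t))"
proof -
  obtain m u v where t: "t = (m, u, v)" by (cases t) auto
  define G where "G x = map_pmf (\<lambda>s. s + (u + of_bool x)) (binomial_pmf m (1/2))" for x
  have "bind_pmf (split_step r a b t) sum_X_given =
        bind_pmf (bernoulli_pmf r) (\<lambda>z. if z then bind_pmf (bernoulli_pmf (1/2)) G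
                                        else bind_pmf (map_pmf fst (bernoulli_coupling a b)) G)"
    unfolding t split_step_def sum_X_given_def G_def
    by (auto simp: bind_assoc_pmf bind_return_pmf bind_map_pmf fair_binomial_Suc_shift split_beta
             intro!: bind_pmf_cong)
  also have "\<dots> = bind_pmf (bind_pmf (bernoulli_pmf r) (\<lambda>z. if z then bernoulli_pmf (1/2) else bernoulli_pmf a)) G"
    using assms by (auto simp: bernoulli_coupling_marginals bind_assoc_pmf intro!: bind_pmf_cong)
  also have "\<dots> = bind_pmf (bernoulli_pmf (r/2 + (1-r)*a)) G" using assms by (simp add: bernoulli_mixture)
  finally show ?thesis unfolding G_def t sum_X_given_def by (simp add: map_pmf_comp add.assoc)
qed

lemma split_step_sum_Y:
  assumes "0 \<le> r" "r \<le> 1" "0 \<le> a" "a \<le> 1" "0 \<le> b" "b \<le> 1"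
  shows "bind_pmf (split_step r a b t) sum_Y_given =
         bind_pmf (bernoulli_pmf (r/2 + (1-r)*b)) (\<lambda>y. map_pmf (\<lambda>s. s + of_bool y) (sum_Y_given t))"
proof -
  obtain m u v where t: "t = (m, u, v)" by (cases t) auto
  define G where "G x = map_pmf (\<lambda>s. s + (v + of_bool x)) (binomial_pmf m (1/2))" for x
  have "bind_pmf (split_step r a b t) sum_Y_given =
        bind_pmf (bernoulli_pmf r) (\<lambda>z. if z then bind_pmf (bernoulli_pmf (1/2)) G
                                        else bind_pmf (map_pmf snd (bernoulli_coupling a b)) G)"
    unfolding t split_step_def sum_Y_given_def G_def
    by (auto simp: bind_assoc_pmf bind_return_pmf bind_map_pmf fair_binomial_Suc_shift split_beta
             intro!: bind_pmf_cong)
  also have "\<dots> = bind_pmf (bind_pmf (bernoulli_pmf r) (\<lambda>z. if z then bernoulli_pmf (1/2) else bernoulli_pmf b)) G"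
    using assms by (auto simp: bernoulli_coupling_marginals bind_assoc_pmf intro!: bind_pmf_cong)
  also have "\<dots> = bind_pmf (bernoulli_pmf (r/2 + (1-r)*b)) G" using assms by (simp add: bernoulli_mixture)
  finally show ?thesis unfolding G_def t sum_Y_given_def by (simp add: map_pmf_comp add.assoc)
qed

lemma split_step_fair_count:
  "map_pmf fst (split_step r a b (m, u, v)) = map_pmf (\<lambda>z. if z then Suc m else m) (bernoulli_pmf r)"
proof -
  have "map_pmf fst (split_step r a b (m, u, v)) = bind_pmf (bernoulli_pmf r) (\<lambda>z. return_pmf (if z then Suc m else m))"
    unfolding split_step_def by (auto simp: map_bind_pmf map_pmf_comp split_beta intro!: bind_pmf_cong)
  then show ?thesis by (simp add: map_pmf_def)
qed

lemma expectation_split_step: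
  assumes "0 \<le> r" "r \<le> 1" "0 \<le> a" "a \<le> 1" "0 \<le> b" "b \<le> 1"
  shows "measure_pmf.expectation (split_step r a b (m, u, v)) h
         = r * h (Suc m, u, v) + (1 - r) * (min a b * h (m, Suc u, Suc v) + (a - min a b) * h (m, Suc u, v)
             + (b - min a b) * h (m, u, Suc v) + (1 - max a b) * h (m, u, v))"
proof -
  have "finite (set_pmf (bernoulli_pmf r))" by (rule finite_subset[OF subset_UNIV]) simp
  then have "measure_pmf.expectation (split_step r a b (m, u, v)) h
        = r * h (Suc m, u, v)
          + (1 - r) * measure_pmf.expectation (bernoulli_coupling a b) (\<lambda>(x, y). h (m, u + of_bool x, v + of_bool y))"
    using assms finite_set_bernoulli_coupling unfolding split_step_def
    by (simp add: expectation_bind_finite case_prod_unfold)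
  then show ?thesis using assms by (simp add: expectation_bernoulli_coupling)
qed

text \<open>One step moves the mean gap by \<open>(1-r)(a-b)\<close> and raises its second moment by the
  cross term plus the probability \<open>(1-r)|a-b|\<close> that the two new indicators disagree.\<close>
lemma split_step_gap_moments:
  assumes "0 \<le> r" "r \<le> 1" "0 \<le> a" "a \<le> 1" "0 \<le> b" "b \<le> 1"
  shows "measure_pmf.expectation (split_step r a b t) state_gap = state_gap t + (1 - r) * (a - b)"
    and "measure_pmf.expectation (split_step r a b t) (\<lambda>t. (state_gap t)^2)
         = (state_gap t)^2 + 2 * ((1 - r) * (a - b)) * state_gap t + (1 - r) * \<bar>a - b\<bar>"
proof -
  obtain m u v where t: "t = (m, u, v)" by (cases t) auto
  show "measure_pmf.expectation (split_step r a b t) state_gap = state_gap t + (1 - r) * (a - b)"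
    unfolding t expectation_split_step[OF assms] state_gap_def
    by (cases "a \<le> b") (simp_all add: algebra_simps min_def max_def)
  show "measure_pmf.expectation (split_step r a b t) (\<lambda>t. (state_gap t)^2)
         = (state_gap t)^2 + 2 * ((1 - r) * (a - b)) * state_gap t + (1 - r) * \<bar>a - b\<bar>"
    unfolding t expectation_split_step[OF assms] state_gap_def
    by (cases "a \<le> b") (simp_all add: algebra_simps power2_eq_square min_def max_def)
qed

lemma bind_split_step_sum_X:
  assumes "0 \<le> r" "r \<le> 1" "0 \<le> a" "a \<le> 1" "0 \<le> b" "b \<le> 1"
  shows "bind_pmf (bind_pmf R (split_step r a b)) sum_X_given
         = bind_pmf (bernoulli_pmf (r/2 + (1-r)*a)) (\<lambda>x. map_pmf (\<lambda>s. s + of_bool x) (bind_pmf R sum_X_given))"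
  by (simp add: bind_assoc_pmf split_step_sum_X[OF assms] map_bind_pmf bind_commute_pmf[of R])

lemma bind_split_step_sum_Y:
  assumes "0 \<le> r" "r \<le> 1" "0 \<le> a" "a \<le> 1" "0 \<le> b" "b \<le> 1"
  shows "bind_pmf (bind_pmf R (split_step r a b)) sum_Y_given
         = bind_pmf (bernoulli_pmf (r/2 + (1-r)*b)) (\<lambda>y. map_pmf (\<lambda>s. s + of_bool y) (bind_pmf R sum_Y_given))"
  by (simp add: bind_assoc_pmf split_step_sum_Y[OF assms] map_bind_pmf bind_commute_pmf[of R])

lemma bind_split_step_fair_count:
  assumes "map_pmf fst R = binomial_pmf n r" "0 \<le> r" "r \<le> 1"
  shows "map_pmf fst (bind_pmf R (split_step r a b)) = binomial_pmf (Suc n) r"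
proof -
  have "map_pmf fst (bind_pmf R (split_step r a b))
        = bind_pmf R (\<lambda>t. map_pmf (\<lambda>z. if z then Suc (fst t) else fst t) (bernoulli_pmf r))"
    unfolding map_bind_pmf
  proof (rule bind_pmf_cong[OF refl])
    fix t :: split_state
    obtain m u v where t: "t = (m, u, v)" by (cases t) auto
    show "map_pmf fst (split_step r a b t) = map_pmf (\<lambda>z. if z then Suc (fst t) else fst t) (bernoulli_pmf r)"
      unfolding t by (simp only: split_step_fair_count fst_conv)
  qed
  also have "\<dots> = bind_pmf (map_pmf fst R) (\<lambda>m. map_pmf (\<lambda>z. if z then Suc m else m) (bernoulli_pmf r))"
    by (simp add: bind_map_pmf)
  also have "\<dots> = binomial_pmf (Suc n) r"
    unfolding assms(1) using assms(2,3)
    by (subst binomial_pmf_Suc) (auto simp: map_pmf_def intro!: bind_pmf_cong[OF refl] | subst bind_commute_pmf)+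
  finally show ?thesis .
qed

lemma bind_split_step_gap_moments:
  assumes "finite (set_pmf R)" "0 \<le> r" "r \<le> 1" "0 \<le> a" "a \<le> 1" "0 \<le> b" "b \<le> 1"
  defines "E \<equiv> \<lambda>f. measure_pmf.expectation R f"
  shows "measure_pmf.expectation (bind_pmf R (split_step r a b)) state_gap = E state_gap + (1 - r) * (a - b)"
    and "measure_pmf.expectation (bind_pmf R (split_step r a b)) (\<lambda>t. (state_gap t)^2)
         = E (\<lambda>t. (state_gap t)^2) + 2 * ((1 - r) * (a - b)) * E state_gap + (1 - r) * \<bar>a - b\<bar>"
proof -
  have int: "integrable (measure_pmf R) f" for f :: "split_state \<Rightarrow> real"
    using assms(1) by (rule integrable_measure_pmf_finite)
  note moments = split_step_gap_moments[OF assms(2-7)]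
  show "measure_pmf.expectation (bind_pmf R (split_step r a b)) state_gap = E state_gap + (1 - r) * (a - b)"
    using assms(1) unfolding E_def
    by (simp add: expectation_bind_finite finite_set_split_step moments int)
  show "measure_pmf.expectation (bind_pmf R (split_step r a b)) (\<lambda>t. (state_gap t)^2)
         = E (\<lambda>t. (state_gap t)^2) + 2 * ((1 - r) * (a - b)) * E state_gap + (1 - r) * \<bar>a - b\<bar>"
    using assms(1) unfolding E_def
    by (simp add: expectation_bind_finite finite_set_split_step moments int)
qed

text \<open>If \<open>r/2 \<le> x \<le> 1 - r/2\<close>, then \<open>Bernoulli(x)\<close> is a mixture: a fair coin with
  probability \<open>r\<close>, and \<open>Bernoulli(fair_residual r x)\<close> otherwise.\<close>
definition fair_residual :: "real \<Rightarrow> real \<Rightarrow> real" where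
  "fair_residual r x = (x - r/2) / (1 - r)"

lemma fair_residual:
  assumes "0 < r" "r < 1" "r/2 \<le> x" "x \<le> 1 - r/2"
  shows "0 \<le> fair_residual r x" "fair_residual r x \<le> 1" "r/2 + (1-r) * fair_residual r x = x"
  using assms unfolding fair_residual_def by (auto simp: divide_le_eq)

lemma fair_residual_diff:
  assumes "r < 1"
  shows "(1-r) * (fair_residual r x - fair_residual r y) = x - y"
    and "(1-r) * \<bar>fair_residual r x - fair_residual r y\<bar> = \<bar>x - y\<bar>"
proof -
  have "fair_residual r x - fair_residual r y = (x - y) / (1 - r)"
    unfolding fair_residual_def by (simp add: diff_divide_distrib)
  then show "(1-r) * (fair_residual r x - fair_residual r y) = x - y"
    and "(1-r) * \<bar>fair_residual r x - fair_residual r y\<bar> = \<bar>x - y\<bar>"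
    using assms by (simp_all add: abs_divide)
qed

definition split_coupling :: "nat set \<Rightarrow> (nat \<Rightarrow> real) \<Rightarrow> (nat \<Rightarrow> real) \<Rightarrow> real \<Rightarrow> split_state pmf \<Rightarrow> bool" where
  "split_coupling N p q r R \<longleftrightarrow>
     indep_ind_sum N p = bind_pmf R sum_X_given \<and> indep_ind_sum N q = bind_pmf R sum_Y_given \<and>
     map_pmf fst R = binomial_pmf (card N) r \<and> finite (set_pmf R) \<and>
     measure_pmf.expectation R state_gap = (\<Sum>i\<in>N. p i - q i) \<and>
     measure_pmf.expectation R (\<lambda>t. (state_gap t)^2) \<le> (\<Sum>i\<in>N. p i - q i)^2 + (\<Sum>i\<in>N. \<bar>p i - q i\<bar>)"

lemma split_coupling_empty:
  assumes "0 \<le> r" "r \<le> 1"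
  shows "split_coupling {} p q r (return_pmf (0, 0, 0))"
proof -
  have "indep_ind_sum {} f = return_pmf 0" for f unfolding indep_ind_sum_def by simp
  then show ?thesis using assms
    by (simp add: split_coupling_def bind_return_pmf sum_X_given_def sum_Y_given_def state_gap_def binomial_pmf_0)
qed

text \<open>Adding an index by one step preserves the invariant: with \<open>S\<close> the old total difference,
  the second moment grows by \<open>2 (p\<^sub>i - q\<^sub>i) S + |p\<^sub>i - q\<^sub>i|\<close>, which fits the new bound.\<close>
lemma split_coupling_insert:
  assumes R: "split_coupling F p q r R" and i: "finite F" "i \<notin> F"
    and r: "0 < r" "r < 1"
    and p_i: "r/2 \<le> p i" "p i \<le> 1 - r/2" and q_i: "r/2 \<le> q i" "q i \<le> 1 - r/2"
  shows "split_coupling (insert i F) p q r (bind_pmf R (split_step r (fair_residual r (p i)) (fair_residual r (q i))))"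
proof -
  define a where "a = fair_residual r (p i)"
  define b where "b = fair_residual r (q i)"
  define R' where "R' = bind_pmf R (split_step r a b)"
  note a = fair_residual[OF r p_i, folded a_def] and b = fair_residual[OF r q_i, folded b_def]
  have r01: "0 \<le> r" "r \<le> 1" using r by auto
  note diff = fair_residual_diff[OF r(2), of "p i" "q i", folded a_def b_def]
  note inv = R[unfolded split_coupling_def]
  have X: "indep_ind_sum (insert i F) p = bind_pmf R' sum_X_given"
    unfolding R'_def bind_split_step_sum_X[OF r01 a(1,2) b(1,2)] a(3) indep_ind_sum_insert[OF i] inv[THEN conjunct1] ..
  have Y: "indep_ind_sum (insert i F) q = bind_pmf R' sum_Y_given"
    unfolding R'_def bind_split_step_sum_Y[OF r01 a(1,2) b(1,2)] b(3) indep_ind_sum_insert[OF i] using inv by simp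
  have count: "map_pmf fst R' = binomial_pmf (card (insert i F)) r"
    unfolding R'_def using bind_split_step_fair_count[OF _ r01] inv i by simp
  have fin: "finite (set_pmf R')" unfolding R'_def using inv finite_set_split_step by simp
  note moments = bind_split_step_gap_moments[OF _ r01 a(1,2) b(1,2), of R, folded R'_def, unfolded diff]
  define S where "S = (\<Sum>i\<in>F. p i - q i)"
  define T where "T = (\<Sum>i\<in>F. \<bar>p i - q i\<bar>)"
  have mean: "measure_pmf.expectation R' state_gap = (p i - q i) + S"
    using moments(1) inv unfolding S_def by simp
  have "measure_pmf.expectation R' (\<lambda>t. (state_gap t)^2) \<le> S^2 + T + 2 * (p i - q i) * S + \<bar>p i - q i\<bar>"
    using moments(2) inv unfolding S_def T_def by simp
  also have "\<dots> \<le> ((p i - q i) + S)^2 + (\<bar>p i - q i\<bar> + T)"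
    using zero_le_power2[of "p i - q i"] by (simp add: power2_eq_square algebra_simps)
  finally show ?thesis
    using X Y count fin mean i unfolding split_coupling_def S_def T_def a_def b_def R'_def by simp
qed

lemma split_coupling_exists:
  assumes "finite N" and r: "0 < r" "r < 1"
    and "\<forall>i\<in>N. r/2 \<le> p i \<and> p i \<le> 1 - r/2" "\<forall>i\<in>N. r/2 \<le> q i \<and> q i \<le> 1 - r/2"
  shows "\<exists>R. split_coupling N p q r R"
  using assms(1,4,5)
proof (induction N rule: finite_induct)
  case empty
  show ?case using split_coupling_empty r by (metis less_eq_real_def)
next
  case (insert i F)
  then obtain R where "split_coupling F p q r R" by auto
  then show ?case using split_coupling_insert[OF _ insert.hyps r] insert.prems by blast
qed

lemma tv_dist_le:
  assumes "\<And>A. \<bar>measure_pmf.prob P A - measure_pmf.prob Q A\<bar> \<le> c"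
  shows "tv_dist P Q \<le> c"
  unfolding tv_dist_def using assms by (intro cSUP_least) auto

text \<open>Cauchy-Schwarz for a finitely supported law, in the form \<open>E|fg| \<le> sqrt(F G)\<close> for
  upper bounds \<open>F\<close>, \<open>G\<close> of the second moments; proved from \<open>|fg| \<le> (s f\<^sup>2 + g\<^sup>2/s)/2\<close>.\<close>
lemma expectation_cauchy_schwarz:
  fixes f g :: "'a \<Rightarrow> real"
  assumes "finite (set_pmf R)"
    and f: "measure_pmf.expectation R (\<lambda>x. (f x)^2) \<le> F" and g: "measure_pmf.expectation R (\<lambda>x. (g x)^2) \<le> G"
    and "0 < F" "0 < G"
  shows "measure_pmf.expectation R (\<lambda>x. \<bar>f x\<bar> * \<bar>g x\<bar>) \<le> sqrt (F * G)"
proof -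
  define c where "c = sqrt (G / F)"
  have c: "0 < c" unfolding c_def using assms by simp
  have int: "integrable (measure_pmf R) h" for h :: "'a \<Rightarrow> real"
    using assms(1) by (rule integrable_measure_pmf_finite)
  have pointwise: "\<bar>f x\<bar> * \<bar>g x\<bar> \<le> (c / 2) * (f x)^2 + (1 / (2 * c)) * (g x)^2" for x
  proof -
    have "0 \<le> (c * \<bar>f x\<bar> - \<bar>g x\<bar>)^2" by simp
    then have "2 * c * (\<bar>f x\<bar> * \<bar>g x\<bar>) \<le> c^2 * (f x)^2 + (g x)^2"
      by (simp add: power2_eq_square algebra_simps)
    then show ?thesis using c by (simp add: field_simps power2_eq_square)
  qed
  have "measure_pmf.expectation R (\<lambda>x. \<bar>f x\<bar> * \<bar>g x\<bar>)
        \<le> measure_pmf.expectation R (\<lambda>x. (c / 2) * (f x)^2 + (1 / (2 * c)) * (g x)^2)"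
    by (intro integral_mono int pointwise)
  also have "\<dots> = (c / 2) * measure_pmf.expectation R (\<lambda>x. (f x)^2)
                  + (1 / (2 * c)) * measure_pmf.expectation R (\<lambda>x. (g x)^2)"
    by (simp add: int)
  also have "\<dots> \<le> (c / 2) * F + (1 / (2 * c)) * G"
    using f g c by (intro add_mono mult_left_mono) auto
  also have "\<dots> = sqrt (F * G)"
    using assms c unfolding c_def by (simp add: real_sqrt_divide real_sqrt_mult field_simps)
  finally show ?thesis .
qed

text \<open>Given a state, the two sums are shifts of the same fair binomial law, so their
  probabilities of any event differ by at most \<open>|u - v|\<close> times the mode probability.\<close>
lemma sum_given_difference:
  "\<bar>measure_pmf.prob (sum_X_given t) A - measure_pmf.prob (sum_Y_given t) A\<bar>
     \<le> \<bar>state_gap t\<bar> * fair_binomial_mode (fst t)"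
proof -
  obtain m u v where t: "t = (m, u, v)" by (cases t) auto
  show ?thesis
    using fair_binomial_shift[of u m A v] unfolding t sum_X_given_def sum_Y_given_def state_gap_def by simp
qed

lemma expectation_mode_sq:
  assumes count: "map_pmf fst R = binomial_pmf n r" and fin: "finite (set_pmf R)" and r: "0 < r" "r \<le> 1"
  shows "measure_pmf.expectation R (\<lambda>t. (fair_binomial_mode (fst t))^2) \<le> 2 / ((real n + 1) * r)"
proof -
  have "measure_pmf.expectation R (\<lambda>t. (fair_binomial_mode (fst t))^2)
        \<le> measure_pmf.expectation R (\<lambda>t. 2 * (1 / (real (fst t) + 1)))"
    using fin by (intro integral_mono integrable_measure_pmf_finite) (simp_all add: fair_binomial_mode_sq)
  also have "\<dots> = measure_pmf.expectation (map_pmf fst R) (\<lambda>m. 2 * (1 / (real m + 1)))"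
    by simp
  also have "\<dots> = 2 * measure_pmf.expectation (binomial_pmf n r) (\<lambda>m. 1 / (real m + 1))"
    unfolding count by (rule integral_mult_right_zero)
  also have "\<dots> \<le> 2 / ((real n + 1) * r)"
    using binomial_inverse_moment[OF r, of n] by simp
  finally show ?thesis .
qed

text \<open>Averaging the conditional bound over the states and applying Cauchy-Schwarz bounds the
  distance of the two sums by the second moments of the gap and of the mode probability.\<close>
lemma split_coupling_tv:
  assumes R: "split_coupling N p q r R" and r: "0 < r" "r \<le> 1"
    and W: "measure_pmf.expectation R (\<lambda>t. (state_gap t)^2) \<le> W" "0 < W"
  shows "tv_dist (indep_ind_sum N p) (indep_ind_sum N q) \<le> sqrt (2 / ((real (card N) + 1) * r) * W)"
proof -
  define B where "B = 2 / ((real (card N) + 1) * r)"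
  define mode where "mode t = fair_binomial_mode (fst t)" for t :: split_state
  note inv = R[unfolded split_coupling_def]
  have fin: "finite (set_pmf R)" using inv by simp
  have int: "integrable (measure_pmf R) h" for h :: "split_state \<Rightarrow> real"
    using fin by (rule integrable_measure_pmf_finite)
  have modes: "measure_pmf.expectation R (\<lambda>t. (mode t)^2) \<le> B"
    unfolding mode_def B_def using expectation_mode_sq[OF _ fin r] inv by simp
  have fin_given: "finite (set_pmf (sum_X_given t))" "finite (set_pmf (sum_Y_given t))" for t
    by (auto simp: sum_X_given_def sum_Y_given_def split: prod.split)
  have "\<bar>measure_pmf.prob (indep_ind_sum N p) A - measure_pmf.prob (indep_ind_sum N q) A\<bar> \<le> sqrt (W * B)" for A
  proof -
    define diff where "diff t = measure_pmf.prob (sum_X_given t) A - measure_pmf.prob (sum_Y_given t) A" for t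
    have "\<bar>measure_pmf.prob (indep_ind_sum N p) A - measure_pmf.prob (indep_ind_sum N q) A\<bar>
          = \<bar>measure_pmf.expectation R diff\<bar>"
      using inv fin_given unfolding diff_def by (simp add: prob_bind_finite int)
    also have "\<dots> \<le> measure_pmf.expectation R (\<lambda>t. \<bar>diff t\<bar>)"
      using integral_norm_bound[of R diff] by simp
    also have "\<dots> \<le> measure_pmf.expectation R (\<lambda>t. \<bar>state_gap t\<bar> * \<bar>mode t\<bar>)"
      using sum_given_difference fair_binomial_mode_nonneg unfolding diff_def mode_def
      by (intro integral_mono int) simp
    also have "\<dots> \<le> sqrt (W * B)"
      using expectation_cauchy_schwarz[OF fin W(1) modes W(2)] r unfolding B_def by simp
    finally show ?thesis .
  qed
  then show ?thesis unfolding B_def by (intro tv_dist_le) (simp add: mult.commute)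
qed

theorem indep_ind_sum_tv_bound:
  assumes "finite N" and r: "0 < r" "r < 1"
    and p: "\<forall>i\<in>N. r/2 \<le> p i \<and> p i \<le> 1 - r/2" and q: "\<forall>i\<in>N. r/2 \<le> q i \<and> q i \<le> 1 - r/2"
    and close: "\<forall>i\<in>N. \<bar>p i - q i\<bar> \<le> \<delta>" and total: "\<bar>\<Sum>i\<in>N. p i - q i\<bar> \<le> 1"
  shows "tv_dist (indep_ind_sum N p) (indep_ind_sum N q)
         \<le> sqrt (2 / ((real (card N) + 1) * r) * (1 + real (card N) * \<delta>))"
proof -
  obtain R where R: "split_coupling N p q r R" using split_coupling_exists[OF assms(1) r p q] by blast
  have "(\<Sum>i\<in>N. p i - q i)^2 \<le> 1" using total by (simp add: abs_square_le_1)
  moreover have "(\<Sum>i\<in>N. \<bar>p i - q i\<bar>) \<le> real (card N) * \<delta>"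
    using sum_mono[of N "\<lambda>i. \<bar>p i - q i\<bar>" "\<lambda>_. \<delta>"] close by simp
  ultimately have "measure_pmf.expectation R (\<lambda>t. (state_gap t)^2) \<le> 1 + real (card N) * \<delta>"
    using R unfolding split_coupling_def by linarith
  moreover have "0 < 1 + real (card N) * \<delta>"
  proof (cases "N = {}")
    case False
    then obtain i where "i \<in> N" by auto
    then have "0 \<le> \<delta>" using close abs_ge_zero order_trans by blast
    then show ?thesis by (simp add: add_pos_nonneg)
  qed simp
  ultimately show ?thesis using split_coupling_tv[OF R r(1)] r(2) by (simp only: less_imp_le)
qed

section \<open>The medium-expectation rounding\<close>

lemma rank_count:
  fixes B :: "nat set" and \<sigma> :: "nat \<Rightarrow> nat"
  assumes "finite B" "inj_on \<sigma> B"
  shows "card {i\<in>B. card {i'\<in>B. \<sigma> i' < \<sigma> i} < m} = min m (card B)"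
proof -
  define rk where "rk i = card {i'\<in>B. \<sigma> i' < \<sigma> i}" for i
  have rk_mono: "rk i < rk i'" if "i \<in> B" "i' \<in> B" "\<sigma> i < \<sigma> i'" for i i'
  proof -
    have "{x\<in>B. \<sigma> x < \<sigma> i} \<subset> {x\<in>B. \<sigma> x < \<sigma> i'}" using that by auto
    then show ?thesis unfolding rk_def using assms(1) by (intro psubset_card_mono) auto
  qed
  have inj: "inj_on rk B"
  proof (rule inj_onI)
    fix i i' assume i: "i \<in> B" "i' \<in> B" "rk i = rk i'"
    show "i = i'"
    proof (rule ccontr)
      assume "i \<noteq> i'"
      then have "\<sigma> i < \<sigma> i' \<or> \<sigma> i' < \<sigma> i" using assms(2) i by (metis inj_on_eq_iff linorder_neqE_nat)
      then show False using rk_mono i by fastforce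
    qed
  qed
  have "rk i < card B" if "i \<in> B" for i
  proof -
    have "rk i \<le> card (B - {i})" unfolding rk_def using assms(1) by (intro card_mono) auto
    also have "\<dots> < card B" using that assms(1) by (intro card_Diff1_less)
    finally show ?thesis .
  qed
  then have img: "rk ` B = {..<card B}"
    using inj assms(1) by (intro card_subset_eq) (auto simp: card_image)
  have "card {i\<in>B. rk i < m} = card (rk ` {i\<in>B. rk i < m})"
    using inj by (intro card_image[symmetric]) (auto intro: inj_on_subset)
  also have "rk ` {i\<in>B. rk i < m} = {..<card B} \<inter> {..<m}" using img by auto
  also have "\<dots> = {..<min m (card B)}" by auto
  finally show ?thesis unfolding rk_def by simp
qed

lemma Ij_floor:
  assumes "0 < k" "x \<in> Ij k j"
  shows "j = nat \<lfloor>real k * x\<rfloor>"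
proof (cases "j < k div 2")
  case True
  then have "real j \<le> real k * x" "real k * x < real j + 1" using assms unfolding Ij_def by (auto simp: field_simps)
  then show ?thesis by linarith
next
  case False
  then have "real j \<le> real k * x" "real k * x \<le> real k / 2" using assms unfolding Ij_def by (auto simp: field_simps)
  moreover have "real k / 2 < real (k div 2) + 1" by linarith
  ultimately show ?thesis using False by linarith
qed

lemma Ij_bounds:
  assumes "0 < k" "x \<in> Ij k j"
  shows "real j / real k \<le> x" "x \<le> (real j + 1) / real k" "x \<le> 1/2"
proof -
  have half: "real (k div 2) \<le> real k / 2" "real k / 2 < real (k div 2) + 1" by linarith+
  show "real j / real k \<le> x" using assms unfolding Ij_def by (auto split: if_splits)
  have "x \<le> (real j + 1) / real k \<and> x \<le> 1/2"
  proof (cases "j < k div 2")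
    case True
    then have "real j + 1 \<le> real k / 2" using half by linarith
    then have "(real j + 1) / real k \<le> 1/2" using assms(1) by (simp add: field_simps)
    moreover have "x < (real j + 1) / real k" using assms True unfolding Ij_def by auto
    ultimately show ?thesis by linarith
  next
    case False
    then have "real k / 2 \<le> real j + 1" using half by linarith
    then have "1/2 \<le> (real j + 1) / real k" using assms(1) by (simp add: field_simps)
    moreover have "x \<le> 1/2" using assms False unfolding Ij_def by auto
    ultimately show ?thesis by linarith
  qed
  then show "x \<le> (real j + 1) / real k" "x \<le> 1/2" by auto
qed

lemma finite_blk: "finite (blk k p n j)"
  unfolding blk_def by simp

lemma blk_index:
  assumes "0 < k" "i \<in> blk k p n j"
  shows "j = nat \<lfloor>real k * p i\<rfloor>"
  using assms Ij_floor unfolding blk_def by blast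

lemma blk_disjoint:
  assumes "0 < k" "j \<noteq> j'"
  shows "blk k p n j \<inter> blk k p n j' = {}"
  using assms blk_index by blast

lemma q_round_blk:
  assumes "0 < k" "j \<in> jrange \<alpha> k" "i \<in> blk k p n j"
  shows "q_round \<alpha> k p n \<sigma> i = (if card {i'\<in>blk k p n j. \<sigma> i' < \<sigma> i} < mj k p n j
                                 then (real j + 1) / real k else real j / real k)"
proof -
  have "(THE j'. j' \<in> jrange \<alpha> k \<and> i \<in> blk k p n j') = j"
    using assms blk_index[OF assms(1)] by (intro the_equality) blast+
  moreover have "i \<in> M1 \<alpha> k p n" using assms unfolding M1_def by auto
  ultimately show ?thesis unfolding q_round_def by (simp only: if_P Let_def)
qed

text \<open>Within one block the rounding removes \<open>m\<^sub>j / k = \<lfloor>k S\<^sub>j\<rfloor> / k\<close> from the excess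
  \<open>S\<^sub>j\<close>, so the block's total rounding error lies in \<open>[0, 1/k)\<close>.\<close>
lemma blk_rounding_error:
  fixes p :: "nat \<Rightarrow> real"
  assumes k: "0 < k" and j: "j \<in> jrange \<alpha> k" and inj: "inj_on \<sigma> {..<n}"
  defines "err \<equiv> (\<Sum>i\<in>blk k p n j. p i - q_round \<alpha> k p n \<sigma> i)"
  shows "0 \<le> err" "err \<le> 1 / real k"
proof -
  define B where "B = blk k p n j"
  define up where "up i \<longleftrightarrow> card {i'\<in>B. \<sigma> i' < \<sigma> i} < mj k p n j" for i
  have injB: "inj_on \<sigma> B" unfolding B_def blk_def using inj by (rule inj_on_subset) auto
  have excess: "0 \<le> p i - real j / real k \<and> p i - real j / real k \<le> 1 / real k" if "i \<in> B" for i
  proof -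
    have "p i \<in> Ij k j" using that unfolding B_def blk_def by simp
    moreover have "(real j + 1) / real k - real j / real k = 1 / real k" by (simp add: diff_divide_distrib[symmetric])
    ultimately show ?thesis using Ij_bounds[OF k] by fastforce
  qed
  then have "0 \<le> Sj k p n j" "Sj k p n j \<le> real (card B) / real k"
    using sum_mono[of B "\<lambda>i. p i - real j / real k" "\<lambda>_. 1 / real k"]
    unfolding Sj_def B_def[symmetric] by (auto intro: sum_nonneg)
  then have kS: "0 \<le> real k * Sj k p n j" "real k * Sj k p n j \<le> real (card B)"
    using k by (simp_all add: field_simps)
  then have m: "real (mj k p n j) \<le> real k * Sj k p n j" "real k * Sj k p n j < real (mj k p n j) + 1"
    unfolding mj_def by linarith+
  then have min: "min (mj k p n j) (card B) = mj k p n j" using kS by simp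
  have "err = (\<Sum>i\<in>B. (p i - real j / real k) - (if up i then 1 / real k else 0))"
    unfolding err_def B_def[symmetric] using q_round_blk[OF k j, of _ p n \<sigma>]
    by (intro sum.cong) (auto simp: B_def up_def add_divide_distrib)
  also have "\<dots> = Sj k p n j - real (card {i\<in>B. up i}) / real k"
    unfolding Sj_def B_def[symmetric] sum_subtractf
    using sum.inter_filter[OF finite_blk[of k p n j, folded B_def], of "\<lambda>_. 1 / real k" up] by simp
  also have "card {i\<in>B. up i} = mj k p n j"
    unfolding up_def rank_count[OF finite_blk[of k p n j, folded B_def] injB] min ..
  finally have "err = (real k * Sj k p n j - real (mj k p n j)) / real k"
    using k by (simp add: field_simps)
  then show "0 \<le> err" "err \<le> 1 / real k" using m k by (simp_all add: divide_right_mono)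
qed

lemma rounding_total_error:
  fixes p :: "nat \<Rightarrow> real" and \<alpha> :: real
  assumes k: "0 < k" and inj: "inj_on \<sigma> {..<n}"
  defines "err \<equiv> (\<Sum>i\<in>M1 \<alpha> k p n. p i - q_round \<alpha> k p n \<sigma> i)"
  shows "0 \<le> err" "err \<le> 1"
proof -
  have err: "err = (\<Sum>j\<in>jrange \<alpha> k. \<Sum>i\<in>blk k p n j. p i - q_round \<alpha> k p n \<sigma> i)"
    unfolding err_def M1_def using blk_disjoint[OF k]
    by (intro sum.UNION_disjoint) (auto simp: jrange_def finite_blk)
  note block = blk_rounding_error[OF k _ inj, of _ \<alpha> p]
  show "0 \<le> err" unfolding err by (rule sum_nonneg) (rule block(1))
  have "err \<le> (\<Sum>j\<in>jrange \<alpha> k. 1 / real k)" unfolding err by (rule sum_mono) (rule block(2))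
  also have "\<dots> = real (card (jrange \<alpha> k)) / real k" by simp
  also have "\<dots> \<le> 1"
  proof -
    have "card (jrange \<alpha> k) \<le> Suc (k div 2)" unfolding jrange_def by simp
    also have "\<dots> \<le> k" using k by linarith
    finally show ?thesis using k by simp
  qed
  finally show "err \<le> 1" .
qed

lemma rounded_parameter_bounds:
  fixes p :: "nat \<Rightarrow> real" and \<alpha> :: real and \<sigma> :: "nat \<Rightarrow> nat"
  assumes k: "4 \<le> k" and i: "i \<in> M1 \<alpha> k p n"
  defines "r \<equiv> real (nat \<lfloor>real k powr \<alpha>\<rfloor>) / real k"
    and "q \<equiv> q_round \<alpha> k p n \<sigma>"
  shows "r \<le> 1/2 \<and> (r/2 \<le> p i \<and> p i \<le> 1 - r/2) \<and> (r/2 \<le> q i \<and> q i \<le> 1 - r/2) \<and> \<bar>p i - q i\<bar> \<le> 1 / real k"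
proof -
  obtain j where j: "j \<in> jrange \<alpha> k" "i \<in> blk k p n j" using i unfolding M1_def by auto
  have k0: "0 < k" using k by simp
  have jj: "nat \<lfloor>real k powr \<alpha>\<rfloor> \<le> j" "2 * j \<le> k" using j(1) unfolding jrange_def by auto
  have rj: "r \<le> real j / real k" unfolding r_def using jj by (simp add: divide_right_mono)
  also have "\<dots> \<le> 1/2" using jj k0 by (simp add: field_simps)
  finally have r: "r \<le> 1/2" .
  have "0 \<le> r" unfolding r_def by simp
  have top: "(real j + 1) / real k \<le> 3/4" using jj k by (simp add: field_simps)
  have unit: "(real j + 1) / real k - real j / real k = 1 / real k" by (simp add: diff_divide_distrib[symmetric])
  have p: "real j / real k \<le> p i" "p i \<le> (real j + 1) / real k" "p i \<le> 1/2"
    using Ij_bounds[OF k0] j(2) unfolding blk_def by auto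
  have "q i = real j / real k \<or> q i = (real j + 1) / real k"
    unfolding q_def using q_round_blk[OF k0 j] by simp
  moreover have "real j / real k \<le> (real j + 1) / real k" by (simp add: divide_right_mono)
  ultimately have q: "real j / real k \<le> q i" "q i \<le> (real j + 1) / real k" by auto
  have "r/2 \<le> p i \<and> p i \<le> 1 - r/2" using p rj r \<open>0 \<le> r\<close> by linarith
  moreover have "r/2 \<le> q i \<and> q i \<le> 1 - r/2" using q rj r top \<open>0 \<le> r\<close> by linarith
  moreover have "\<bar>p i - q i\<bar> \<le> 1 / real k" using p q unit by linarith
  ultimately show ?thesis using r by blast
qed

lemma lowest_block_index:
  assumes "0 < \<alpha>" "1 \<le> k"
  shows "1 \<le> nat \<lfloor>real k powr \<alpha>\<rfloor>" "real k powr \<alpha> / 2 \<le> real (nat \<lfloor>real k powr \<alpha>\<rfloor>)"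
proof -
  have ka: "1 \<le> real k powr \<alpha>" using assms by (intro ge_one_powr_ge_zero) auto
  then have floor1: "1 \<le> \<lfloor>real k powr \<alpha>\<rfloor>" by simp
  then show "1 \<le> nat \<lfloor>real k powr \<alpha>\<rfloor>" using nat_mono by fastforce
  have "real k powr \<alpha> < of_int \<lfloor>real k powr \<alpha>\<rfloor> + 1" by linarith
  moreover have "real (nat \<lfloor>real k powr \<alpha>\<rfloor>) = of_int \<lfloor>real k powr \<alpha>\<rfloor>" using ka by simp
  ultimately show "real k powr \<alpha> / 2 \<le> real (nat \<lfloor>real k powr \<alpha>\<rfloor>)" using floor1 by linarith
qed

lemma final_estimate:
  fixes \<alpha> \<beta> x N j0 :: real
  assumes "\<beta> < 1" "\<alpha> + \<beta> > 1" and x: "1 \<le> x"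
    and N: "N > x powr \<beta>" and j0: "j0 \<ge> x powr \<alpha> / 2"
  shows "sqrt (2 / ((N + 1) * (j0 / x)) * (1 + N * (1 / x))) \<le> 3 * x powr (-(\<alpha> + \<beta> - 1) / 2)"
proof -
  define E where "E = x powr (\<alpha> + \<beta> - 1)"
  define r where "r = j0 / x"
  have E: "1 \<le> E" unfolding E_def using assms by (intro ge_one_powr_ge_zero) auto
  have N0: "0 < N" using N le_less_trans[OF powr_ge_zero] by blast
  have "0 < j0" using j0 x by (smt (verit) divide_pos_pos powr_gt_zero)
  then have r0: "0 < r" unfolding r_def using x by simp
  have "E / 2 = x powr \<beta> * ((x powr \<alpha> / 2) / x)"
    unfolding E_def using x by (simp add: powr_diff powr_add field_simps)
  also have "\<dots> \<le> N * r" unfolding r_def using N j0 x N0 by (intro mult_mono divide_right_mono) auto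
  finally have Nr: "E / 2 \<le> N * r" .
  have "E \<le> x powr \<alpha>" unfolding E_def using assms by (intro powr_mono) auto
  then have xr: "E / 2 \<le> x * r" unfolding r_def using j0 x by simp
  have "(2 * N) / (((N + 1) * r) * x) = (2 / (x * r)) * (N / (N + 1))"
    by (simp add: times_divide_times_eq ac_simps)
  then have "2 / ((N + 1) * r) * (1 + N * (1 / x)) = 2 / ((N + 1) * r) + (2 / (x * r)) * (N / (N + 1))"
    by (simp add: distrib_left times_divide_times_eq)
  also have "\<dots> \<le> 2 / (N * r) + 2 / (x * r)"
  proof (rule add_mono)
    have le: "N * r \<le> (N + 1) * r" using r0 by simp
    have pos: "0 < (N + 1) * r * (N * r)" using N0 r0 by simp
    show "2 / ((N + 1) * r) \<le> 2 / (N * r)" using divide_left_mono[OF le _ pos, of 2] by simp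
    have "N / (N + 1) \<le> 1" using N0 by simp
    moreover have "0 \<le> 2 / (x * r)" using r0 x by simp
    ultimately show "2 / (x * r) * (N / (N + 1)) \<le> 2 / (x * r)" by (rule mult_left_le)
  qed
  also have "\<dots> \<le> 2 / (E / 2) + 2 / (E / 2)"
    using Nr xr E by (intro add_mono divide_left_mono) auto
  finally have "2 / ((N + 1) * r) * (1 + N * (1 / x)) \<le> 8 / E" by simp
  then have "sqrt (2 / ((N + 1) * r) * (1 + N * (1 / x))) \<le> sqrt 8 / sqrt E"
    by (simp add: real_sqrt_divide[symmetric])
  also have "\<dots> \<le> 3 / sqrt E"
    using E by (intro divide_right_mono) (simp_all add: real_le_lsqrt)
  also have "3 / sqrt E = 3 * x powr (-(\<alpha> + \<beta> - 1) / 2)"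
  proof -
    have "sqrt E = x powr ((\<alpha> + \<beta> - 1) / 2)"
      unfolding E_def using x by (simp add: powr_half_sqrt[symmetric] powr_powr)
    moreover have "x powr (-(\<alpha> + \<beta> - 1) / 2) = inverse (x powr ((\<alpha> + \<beta> - 1) / 2))"
      unfolding minus_divide_left[symmetric] by (rule powr_minus)
    ultimately show ?thesis by (simp only: divide_inverse)
  qed
  finally show ?thesis unfolding r_def .
qed

theorem mainTheorem13:
  fixes \<alpha> \<beta> :: real
  assumes "0 < \<alpha>" "\<alpha> < 1" "0 < \<beta>" "\<beta> < 1" "\<alpha> + \<beta> > 1"
  shows "\<exists>C::real. \<exists>K::nat. \<forall>k\<ge>K. \<forall>(n::nat) (p::nat \<Rightarrow> real) (\<sigma>::nat \<Rightarrow> nat).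
           0 < k \<longrightarrow> (\<forall>i<n. 0 \<le> p i \<and> p i \<le> 1) \<longrightarrow> inj_on \<sigma> {..<n} \<longrightarrow>
           real (card (M1 \<alpha> k p n)) > real k powr \<beta> \<longrightarrow>
           tv_dist (indep_ind_sum (M1 \<alpha> k p n) p)
                   (indep_ind_sum (M1 \<alpha> k p n) (q_round \<alpha> k p n \<sigma>))
             \<le> C * (real k powr (-(\<alpha> + \<beta> - 1) / 2) + real k powr (-\<alpha>) + real k powr (-1/2))"
proof (intro exI[of _ "3::real"] exI[of _ "4::nat"] allI impI)
  fix k n :: nat and p :: "nat \<Rightarrow> real" and \<sigma> :: "nat \<Rightarrow> nat"
  assume k: "4 \<le> k" and "0 < k" "\<forall>i<n. 0 \<le> p i \<and> p i \<le> 1" and inj: "inj_on \<sigma> {..<n}"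
    and large: "real (card (M1 \<alpha> k p n)) > real k powr \<beta>"
  define N where "N = M1 \<alpha> k p n"
  define q where "q = q_round \<alpha> k p n \<sigma>"
  define j0 where "j0 = nat \<lfloor>real k powr \<alpha>\<rfloor>"
  note bounds = rounded_parameter_bounds[OF k, where p=p and \<alpha>=\<alpha> and n=n and \<sigma>=\<sigma>,
                  folded N_def q_def j0_def]
  have "N \<noteq> {}" using large le_less_trans[OF powr_ge_zero] unfolding N_def by fastforce
  then have "real j0 / real k \<le> 1/2" using bounds by blast
  moreover have "1 \<le> j0" using lowest_block_index(1)[OF assms(1), of k] k unfolding j0_def by simp
  ultimately have r: "0 < real j0 / real k" "real j0 / real k < 1" using k by simp_all
  have "finite N" unfolding N_def M1_def by (auto simp: jrange_def finite_blk)
  then have "tv_dist (indep_ind_sum N p) (indep_ind_sum N q)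
             \<le> sqrt (2 / ((real (card N) + 1) * (real j0 / real k)) * (1 + real (card N) * (1 / real k)))"
    using rounding_total_error[OF \<open>0 < k\<close> inj, where p=p and \<alpha>=\<alpha>] bounds
    by (intro indep_ind_sum_tv_bound r) (auto simp: N_def q_def)
  also have "\<dots> \<le> 3 * real k powr (-(\<alpha> + \<beta> - 1) / 2)"
    using final_estimate[OF assms(4,5)] large lowest_block_index(2)[OF assms(1), of k] k
    unfolding N_def j0_def by simp
  also have "\<dots> \<le> 3 * (real k powr (-(\<alpha> + \<beta> - 1) / 2) + real k powr (-\<alpha>) + real k powr (-1/2))"
    by simp
  finally show "tv_dist (indep_ind_sum (M1 \<alpha> k p n) p) (indep_ind_sum (M1 \<alpha> k p n) (q_round \<alpha> k p n \<sigma>))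
      \<le> 3 * (real k powr (-(\<alpha> + \<beta> - 1) / 2) + real k powr (-\<alpha>) + real k powr (-1/2))"
    unfolding N_def q_def .
qed

end
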